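(* Let $a,b,c$ be nonzero constants, $N\ge1$, and $p_i,q_j$ ($1\le i,j\le N$) nonzero constants with $p_i+q_j\neq0$, and $c_{ij}$ arbitrary constants. For integers $n,k,l,m$ let $$\tau_n(k,l,m)=\det\Big(c_{ij}+\frac{1}{p_i+q_j}\Big(-\frac{p_i}{q_j}\Big)^{n}\Big(\frac{1-ap_i}{1+aq_j}\Big)^{-k}\Big(\frac{1-bp_i^{-1}}{1+bq_j^{-1}}\Big)^{-l}\Big(\frac{1-cp_i}{1+cq_j}\Big)^{m}\Big)_{1\le i,j\le N},$$ or alternatively the Casorati determinant $\tau_n(k,l,m)=\det(\phi^{(i)}_{n+j-1}(k,l,m))_{1\le i,j\le N}$ with $$\phi^{(i)}_n(k,l,m)=c_ip_i^n(1-ap_i)^{-k}(1-bp_i^{-1})^{-l}(1-cp_i)^m+d_iq_i^n(1-aq_i)^{-k}(1-bq_i^{-1})^{-l}(1-cq_i)^m$$ ($c_i,d_i$ arbitrary constants). Then $\tau_n(k,l,m)$ satisfies $$\tau_n(k,l+1,m)\tau_n(k,l,m-1)-bc\,\tau_{n+1}(k,l,m-1)\tau_{n-1}(k,l+1,m)=(1-bc)\tau_n(k,l,m)\tau_n(k,l+1,m-1),$$ $$\tau_{n+1}(k,l,m-1)\tau_n(k+1,l,m)-ac^{-1}\tau_{n+1}(k+1,l,m)\tau_n(k,l,m-1)=(1-ac^{-1})\tau_n(k,l,m)\tau_{n+1}(k+1,l,m-1).$$ *)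

theory Defs
  imports Complex_Main "Jordan_Normal_Form.Determinant"
begin

text \<open>Gram-type tau function. Indices i, j run over 0..N-1 (shifted from 1..N).\<close>
definition tau_gram ::
  "complex \<Rightarrow> complex \<Rightarrow> complex \<Rightarrow> nat \<Rightarrow> (nat \<Rightarrow> complex) \<Rightarrow> (nat \<Rightarrow> complex)
   \<Rightarrow> (nat \<Rightarrow> nat \<Rightarrow> complex) \<Rightarrow> int \<Rightarrow> int \<Rightarrow> int \<Rightarrow> int \<Rightarrow> complex" where
  "tau_gram a b c N p q C n k l m =
     det (mat N N (\<lambda>(i,j). C i j + 1 / (p i + q j)
        * (- p i / q j) powi n
        * ((1 - a * p i) / (1 + a * q j)) powi (- k)
        * ((1 - b / p i) / (1 + b / q j)) powi (- l)
        * ((1 - c * p i) / (1 + c * q j)) powi m))"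

definition phi ::
  "complex \<Rightarrow> complex \<Rightarrow> complex \<Rightarrow> (nat \<Rightarrow> complex) \<Rightarrow> (nat \<Rightarrow> complex)
   \<Rightarrow> (nat \<Rightarrow> complex) \<Rightarrow> (nat \<Rightarrow> complex) \<Rightarrow> nat \<Rightarrow> int \<Rightarrow> int \<Rightarrow> int \<Rightarrow> int \<Rightarrow> complex" where
  "phi a b c p q cc d i n k l m =
     cc i * p i powi n * (1 - a * p i) powi (- k) * (1 - b / p i) powi (- l) * (1 - c * p i) powi m
   + d i * q i powi n * (1 - a * q i) powi (- k) * (1 - b / q i) powi (- l) * (1 - c * q i) powi m"

text \<open>Casorati tau function: det (phi^(i)_(n+j-1)) with 1-based i,j, i.e. phi^(i)_(n+j) 0-based.\<close>
definition tau_cas ::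
  "complex \<Rightarrow> complex \<Rightarrow> complex \<Rightarrow> nat \<Rightarrow> (nat \<Rightarrow> complex) \<Rightarrow> (nat \<Rightarrow> complex)
   \<Rightarrow> (nat \<Rightarrow> complex) \<Rightarrow> (nat \<Rightarrow> complex) \<Rightarrow> int \<Rightarrow> int \<Rightarrow> int \<Rightarrow> int \<Rightarrow> complex" where
  "tau_cas a b c N p q cc d n k l m =
     det (mat N N (\<lambda>(i,j). phi a b c p q cc d i (n + int j) k l m))"

definition bilinear_eqs ::
  "complex \<Rightarrow> complex \<Rightarrow> complex \<Rightarrow> (int \<Rightarrow> int \<Rightarrow> int \<Rightarrow> int \<Rightarrow> complex) \<Rightarrow> bool" where
  "bilinear_eqs a b c tau \<longleftrightarrow> (\<forall>n k l m.
     tau n k (l+1) m * tau n k l (m-1) - b * c * tau (n+1) k l (m-1) * tau (n-1) k (l+1) m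
       = (1 - b * c) * tau n k l m * tau n k (l+1) (m-1)
   \<and> tau (n+1) k l (m-1) * tau n (k+1) l m - a / c * tau (n+1) (k+1) l m * tau n k l (m-1)
       = (1 - a / c) * tau n k l m * tau (n+1) (k+1) l (m-1))"

end

theory Submission
  imports Defs
begin

(* Both determinant formulas rest on one mechanism. A unit shift of k or m changes every column of
   the Casorati matrix by subtracting a multiple of the next one, and changes the Gram matrix by a
   rank-one matrix, since (1 + a q)/((1 - a p)(p + q)) = 1/(p + q) + a/(1 - a p). The l-direction
   becomes a direction of the same kind, with parameter 1/b, after the gauge change n -> n + l.
   Hence the six determinants in either equation are values D(x, y) = det (c | x | y) of one
   determinant with N - 2 common columns (Casorati form) or N common columns after bordering to
   size N + 2 (Gram form), taken at linear combinations of four vectors x1, ..., x4. Since D is a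
   decomposable alternating bilinear form it satisfies the three-term Pluecker relation
   D(x1,x3) D(x2,x4) - D(x1,x4) D(x2,x3) = D(x1,x2) D(x3,x4), to which each equation reduces. *)

section \<open>Determinants with two free columns\<close>

lemma det_2x2:
  assumes "A \<in> carrier_mat 2 2"
  shows "det A = A $$ (0,0) * A $$ (1,1) - A $$ (0,1) * A $$ (1,0)"
proof -
  have "det A = (\<Sum>i<2. A $$ (i,0) * cofactor A i 0)"
    by (rule laplace_expansion_column[OF assms], simp)
  also have "\<dots> = A $$ (0,0) * cofactor A 0 0 + A $$ (1,0) * cofactor A 1 0"
    by (simp add: numeral_2_eq_2)
  also have "cofactor A 0 0 = A $$ (1,1)"
    unfolding cofactor_def using assms by (subst det_single, auto simp: mat_delete_def)
  also have "cofactor A 1 0 = - A $$ (0,1)"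
    unfolding cofactor_def using assms by (subst det_single, auto simp: mat_delete_def)
  finally show ?thesis by (simp add: algebra_simps)
qed

lemma det_leading_unit_cols:
  fixes W :: "'a :: idom mat"
  assumes W: "W \<in> carrier_mat (k+2) (k+2)"
    and unit: "\<And>i j. i < k + 2 \<Longrightarrow> j < k \<Longrightarrow> W $$ (i,j) = (if i = j then 1 else 0)"
  shows "det W = W $$ (k,k) * W $$ (k+1,k+1) - W $$ (k,k+1) * W $$ (k+1,k)"
proof -
  define B where "B = mat k 2 (\<lambda>(i,j). W $$ (i, k + j))"
  define W22 where "W22 = mat 2 2 (\<lambda>(i,j). W $$ (k + i, k + j))"
  have blocks: "W = four_block_mat (1\<^sub>m k) B (0\<^sub>m 2 k) W22"
    by (rule eq_matI) (use W unit in \<open>auto simp: B_def W22_def not_less\<close>)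
  have "det W = det (1\<^sub>m k) * det W22"
    unfolding blocks by (rule det_four_block_mat_lower_left_zero) (auto simp: B_def W22_def)
  also have "\<dots> = W22 $$ (0,0) * W22 $$ (1,1) - W22 $$ (0,1) * W22 $$ (1,0)"
    by (simp add: det_2x2 W22_def)
  finally show ?thesis by (simp add: W22_def)
qed

definition last_cols_mat ::
  "nat \<Rightarrow> (nat \<Rightarrow> nat \<Rightarrow> 'a) \<Rightarrow> (nat \<Rightarrow> 'a) \<Rightarrow> (nat \<Rightarrow> 'a) \<Rightarrow> 'a mat" where
  "last_cols_mat d c x y =
     mat d d (\<lambda>(i,j). if j < d - 2 then c i j else if j = d - 2 then x i else y i)"

definition last_cols_det ::
  "nat \<Rightarrow> (nat \<Rightarrow> nat \<Rightarrow> 'a :: comm_ring_1) \<Rightarrow> (nat \<Rightarrow> 'a) \<Rightarrow> (nat \<Rightarrow> 'a) \<Rightarrow> 'a" where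
  "last_cols_det d c x y = det (last_cols_mat d c x y)"

lemma last_cols_mat_carrier [simp]: "last_cols_mat d c x y \<in> carrier_mat d d"
  by (simp add: last_cols_mat_def)

lemma last_cols_det_via_inverse:
  fixes c :: "nat \<Rightarrow> nat \<Rightarrow> 'a :: field" and k :: nat and u v :: "nat \<Rightarrow> 'a"
  defines "A \<equiv> last_cols_mat (k+2) c u v"
  assumes B: "B \<in> carrier_mat (k+2) (k+2)" and BA: "B * A = 1\<^sub>m (k+2)" and AB: "A * B = 1\<^sub>m (k+2)"
  shows "last_cols_det (k+2) c x y = det A *
    ((B *\<^sub>v vec (k+2) x) $ k * (B *\<^sub>v vec (k+2) y) $ (k+1) - (B *\<^sub>v vec (k+2) x) $ (k+1) * (B *\<^sub>v vec (k+2) y) $ k)"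
proof -
  define X where "X = last_cols_mat (k+2) c x y"
  have A: "A \<in> carrier_mat (k+2) (k+2)" and X: "X \<in> carrier_mat (k+2) (k+2)"
    by (simp_all add: A_def X_def)
  have "det X = det (A * (B * X))"
    using AB A B X by (simp add: assoc_mult_mat[symmetric])
  also have "\<dots> = det A * det (B * X)"
    using A B X by (simp add: det_mult[where n = "k+2"])
  also have "det (B * X) = (B * X) $$ (k,k) * (B * X) $$ (k+1,k+1) - (B * X) $$ (k,k+1) * (B * X) $$ (k+1,k)"
  proof (rule det_leading_unit_cols)
    show "B * X \<in> carrier_mat (k+2) (k+2)" using B X by simp
    fix i j assume i: "i < k + 2" and j: "j < k"
    have "col X j = col A j" using j by (auto simp: X_def A_def last_cols_mat_def)
    then have "(B * X) $$ (i,j) = (B * A) $$ (i,j)" using B X A i j by simp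
    then show "(B * X) $$ (i,j) = (if i = j then 1 else 0)" using BA i j by simp
  qed
  finally have "det X = det A * ((B * X) $$ (k,k) * (B * X) $$ (k+1,k+1) - (B * X) $$ (k,k+1) * (B * X) $$ (k+1,k))" .
  moreover have "col X k = vec (k+2) x" "col X (k+1) = vec (k+2) y"
    by (auto simp: X_def last_cols_mat_def)
  then have "(B * X) $$ (i, k) = (B *\<^sub>v vec (k+2) x) $ i" "(B * X) $$ (i, k+1) = (B *\<^sub>v vec (k+2) y) $ i"
    if "i < k + 2" for i
    using that B X by (auto simp: mult_mat_vec_def)
  ultimately show ?thesis by (simp add: X_def last_cols_det_def)
qed

text \<open>The form \<open>(x, y) \<mapsto> det (c | x | y)\<close> is a decomposable alternating bilinear form: when the
  common columns \<open>c\<close> can be completed to an invertible matrix, \<open>f\<close> and \<open>g\<close> are the last two rows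
  of its inverse.\<close>
lemma last_cols_det_decomposition:
  fixes c :: "nat \<Rightarrow> nat \<Rightarrow> 'a :: field"
  assumes d: "2 \<le> d"
  obtains K f g where "\<And>x y. last_cols_det d c x y = K * (f x * g y - g x * f y)"
    and "\<And>u v. f (\<lambda>i. u i + v i) = f u + f v" "\<And>s u. f (\<lambda>i. s * u i) = s * f u"
    and "\<And>u v. g (\<lambda>i. u i + v i) = g u + g v" "\<And>s u. g (\<lambda>i. s * u i) = s * g u"
proof (cases "\<exists>x0 y0. last_cols_det d c x0 y0 \<noteq> 0")
  case False
  then show ?thesis by (intro that[of 0 "\<lambda>_. 0" "\<lambda>_. 0"]) auto
next
  case True
  then obtain x0 y0 where nz: "last_cols_det d c x0 y0 \<noteq> 0" by blast
  obtain k where dk: "d = k + 2" using d by (metis add.commute le_add_diff_inverse)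
  define A where "A = last_cols_mat d c x0 y0"
  have A: "A \<in> carrier_mat d d" by (simp add: A_def)
  have K: "det A \<noteq> 0" using nz by (simp add: A_def last_cols_det_def)
  define B where "B = (1 / det A) \<cdot>\<^sub>m adj_mat A"
  have B: "B \<in> carrier_mat d d" using adj_mat[OF A] by (simp add: B_def)
  have "(1 / det A) \<cdot>\<^sub>m (det A \<cdot>\<^sub>m 1\<^sub>m d) = 1\<^sub>m d"
    by (rule eq_matI) (use K in auto)
  then have "B * A = 1\<^sub>m d" "A * B = 1\<^sub>m d"
    using adj_mat[OF A] A by (simp_all add: B_def mult_smult_assoc_mat mult_smult_distrib)
  then have inverse: "last_cols_det d c x y
      = det A * ((B *\<^sub>v vec d x) $ k * (B *\<^sub>v vec d y) $ (k+1) - (B *\<^sub>v vec d x) $ (k+1) * (B *\<^sub>v vec d y) $ k)"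
    for x y
    using last_cols_det_via_inverse[where k = k and c = c and u = x0 and v = y0 and B = B] B dk
    by (simp add: A_def)
  have linear: "(B *\<^sub>v vec d (\<lambda>i. u i + v i)) $ r = (B *\<^sub>v vec d u) $ r + (B *\<^sub>v vec d v) $ r"
    "(B *\<^sub>v vec d (\<lambda>i. s * u i)) $ r = s * (B *\<^sub>v vec d u) $ r" if "r < d" for r s u v
    using B that by (simp_all add: scalar_prod_def sum_distrib_left sum.distrib algebra_simps)
  show ?thesis
    by (rule that[of "det A" "\<lambda>x. (B *\<^sub>v vec d x) $ k" "\<lambda>x. (B *\<^sub>v vec d x) $ (k+1)"])
      (use inverse linear dk in auto)
qed

context
  fixes d :: nat and c :: "nat \<Rightarrow> nat \<Rightarrow> 'a :: field"
  assumes d: "2 \<le> d"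
begin

lemma last_cols_det_self: "last_cols_det d c x x = 0"
  by (rule last_cols_det_decomposition[OF d, where c = c]) (simp (no_asm_simp))

lemma last_cols_det_diff_right:
  assumes u: "\<And>i. u i = v i - \<beta> * w i"
  shows "\<beta> * last_cols_det d c x w = last_cols_det d c x v - last_cols_det d c x u"
proof (rule last_cols_det_decomposition[OF d, where c = c])
  fix K f g
  assume D: "\<And>x y. last_cols_det d c x y = K * (f x * g y - g x * f y)"
    and "\<And>u v. f (\<lambda>i. u i + v i) = f u + f v" "\<And>s u. f (\<lambda>i. s * u i) = s * f u"
    and "\<And>u v. g (\<lambda>i. u i + v i) = g u + g v" "\<And>s u. g (\<lambda>i. s * u i) = s * g u"
  moreover have "u = (\<lambda>i. v i + (- \<beta>) * w i)" using u by (simp add: fun_eq_iff)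
  ultimately have fu: "f u = f v + (- \<beta>) * f w" and gu: "g u = g v + (- \<beta>) * g w"
    by (simp_all only:)
  show ?thesis by (simp add: D fu gu algebra_simps)
qed

lemma last_cols_det_pluecker:
  "last_cols_det d c x1 x3 * last_cols_det d c x2 x4 - last_cols_det d c x1 x4 * last_cols_det d c x2 x3
     = last_cols_det d c x1 x2 * last_cols_det d c x3 x4"
  by (rule last_cols_det_decomposition[OF d, where c = c]) (simp (no_asm_simp) add: algebra_simps)

lemma last_cols_det_combination:
  "last_cols_det d c (\<lambda>i. k1 * x1 i + k2 * x2 i + k3 * x3 i + k4 * x4 i)
                     (\<lambda>i. l1 * x1 i + l2 * x2 i + l3 * x3 i + l4 * x4 i)
   = (k1*l2 - k2*l1) * last_cols_det d c x1 x2 + (k1*l3 - k3*l1) * last_cols_det d c x1 x3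
   + (k1*l4 - k4*l1) * last_cols_det d c x1 x4 + (k2*l3 - k3*l2) * last_cols_det d c x2 x3
   + (k2*l4 - k4*l2) * last_cols_det d c x2 x4 + (k3*l4 - k4*l3) * last_cols_det d c x3 x4"
  by (rule last_cols_det_decomposition[OF d, where c = c]) (simp (no_asm_simp) add: algebra_simps)

end

section \<open>Casorati determinants\<close>

text \<open>The column operations amount to right multiplication by a unitriangular matrix.\<close>
lemma det_cols_subtract_next:
  fixes P Q :: "nat \<Rightarrow> nat \<Rightarrow> complex"
  assumes r: "r < N"
    and lower: "\<And>j i. j < r \<Longrightarrow> i < N \<Longrightarrow> P j i = Q j i - \<beta> * Q (Suc j) i"
    and keep: "\<And>j i. r \<le> j \<Longrightarrow> j < N \<Longrightarrow> i < N \<Longrightarrow> P j i = Q j i"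
  shows "det (mat N N (\<lambda>(i,j). P j i)) = det (mat N N (\<lambda>(i,j). Q j i))"
proof -
  define U where "U = mat N N (\<lambda>(i,j). if i = j then 1 else if i = Suc j \<and> j < r then - \<beta> else 0)"
  have U: "U \<in> carrier_mat N N" by (simp add: U_def)
  have "mat N N (\<lambda>(i,j). P j i) = mat N N (\<lambda>(i,j). Q j i) * U"
  proof (rule eq_matI)
    fix i j assume "i < dim_row (mat N N (\<lambda>(i,j). Q j i) * U)" "j < dim_col (mat N N (\<lambda>(i,j). Q j i) * U)"
    then have i: "i < N" and j: "j < N" by (auto simp: U_def)
    have "(mat N N (\<lambda>(i,j). Q j i) * U) $$ (i,j) = (\<Sum>l\<in>{0..<N}. Q l i * U $$ (l,j))"
      using i j U by (simp add: scalar_prod_def)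
    also have "\<dots> = (\<Sum>l\<in>{0..<N}. (if l = j then Q j i else 0)
                      + (if l = Suc j then if j < r then - \<beta> * Q (Suc j) i else 0 else 0))"
      by (rule sum.cong) (auto simp: U_def j)
    also have "\<dots> = Q j i + (if Suc j < N then if j < r then - \<beta> * Q (Suc j) i else 0 else 0)"
      using j by (simp add: sum.distrib)
    also have "\<dots> = P j i"
      using lower[of j i] keep[of j i] i j r by auto
    finally show "mat N N (\<lambda>(i,j). P j i) $$ (i,j) = (mat N N (\<lambda>(i,j). Q j i) * U) $$ (i,j)"
      using i j by simp
  qed (auto simp: U_def)
  moreover have "det U = 1"
    by (subst det_lower_triangular[OF _ U]) (auto simp: U_def prod_list_diag_prod)
  ultimately show ?thesis using U by (simp add: det_mult[where n = N])
qed

definition casorati :: "nat \<Rightarrow> (int \<Rightarrow> nat \<Rightarrow> complex) \<Rightarrow> int \<Rightarrow> complex" where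
  "casorati N f s = det (mat N N (\<lambda>(i,j). f (s + int j) i))"

context
  fixes f g :: "int \<Rightarrow> nat \<Rightarrow> complex" and \<beta> :: complex
  assumes step: "\<And>t i. g t i = f t i - \<beta> * f (t+1) i"
begin

lemma casorati_lower_leading_cols:
  assumes "1 \<le> N"
  shows "casorati N f s = det (mat N N (\<lambda>(i,j). if j < N - 1 then g (s + int j) i else f (s + int j) i))"
  unfolding casorati_def
  by (rule sym, rule det_cols_subtract_next[where r = "N - 1" and \<beta> = \<beta>])
    (use assms step in \<open>auto simp: ac_simps\<close>)

lemma casorati_as_last_cols_det:
  "casorati (M+2) f s = last_cols_det (M+2) (\<lambda>i j. g (s + int j) i) (g (s + int M)) (f (s + int M + 1))"
  using casorati_lower_leading_cols[of "M+2" s] unfolding last_cols_det_def last_cols_mat_def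
  by (auto simp: less_Suc_eq ac_simps intro!: arg_cong[where f = det] cong_mat)

lemma casorati_as_last_cols_det_front:
  "casorati (M+2) f s
     = (-1)^M * last_cols_det (M+2) (\<lambda>i j. g (s + 1 + int j) i) (g s) (f (s + int M + 1))"
proof -
  let ?A = "last_cols_mat (M+2) (\<lambda>i j. g (s + 1 + int j) i) (g s) (f (s + int M + 1))"
  have "swap_col_to_front ?A M
      = mat (M+2) (M+2) (\<lambda>(i,j). if j < M + 1 then g (s + int j) i else f (s + int j) i)"
    by (subst swap_col_to_front_result[of _ "M+2" "M+2"])
      (auto simp: last_cols_mat_def less_Suc_eq ac_simps dest!: gr0_implies_Suc intro!: eq_matI)
  moreover have "det (swap_col_to_front ?A M) = (-1)^M * det ?A"
    by (rule swap_col_to_front_det[of _ "M+2"]) auto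
  ultimately show ?thesis
    using casorati_lower_leading_cols[of "M+2" s] by (simp add: last_cols_det_def)
qed

lemma last_cols_det_lower_middle_cols:
  "last_cols_det (M+2) (\<lambda>i j. f (s + int j) i) (f (s + int M)) v
     = last_cols_det (M+2) (\<lambda>i j. g (s + int j) i) (f (s + int M)) v"
  unfolding last_cols_det_def last_cols_mat_def
  by (rule sym, rule det_cols_subtract_next[where r = M and \<beta> = \<beta>])
    (use step in \<open>auto simp: ac_simps not_less_eq less_Suc_eq\<close>)

end

lemma bilinear_identity_divide:
  fixes \<alpha> \<gamma> A B C D E F :: complex
  assumes "\<gamma> \<noteq> 0" and "\<gamma> * A * B - \<alpha> * C * D = (\<gamma> - \<alpha>) * E * F"
  shows "A * B - \<alpha> / \<gamma> * C * D = (1 - \<alpha> / \<gamma>) * E * F"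
proof -
  have "\<gamma> * (A * B - \<alpha> / \<gamma> * C * D) = \<gamma> * ((1 - \<alpha> / \<gamma>) * E * F)"
    using assms by (simp add: algebra_simps)
  then show ?thesis using assms(1) by simp
qed

context
  fixes G H K L :: "int \<Rightarrow> nat \<Rightarrow> complex" and \<alpha> \<gamma> :: complex
  assumes GH: "\<And>t i. G t i = H t i - \<alpha> * H (t+1) i"
    and GK: "\<And>t i. G t i = K t i - \<gamma> * K (t+1) i"
    and HL: "\<And>t i. H t i = L t i - \<gamma> * L (t+1) i"
    and KL: "\<And>t i. K t i = L t i - \<alpha> * L (t+1) i"
begin

lemma casorati_four_term_identity_ge2:
  "\<gamma> * casorati (M+2) K (n+1) * casorati (M+2) H n - \<alpha> * casorati (M+2) H (n+1) * casorati (M+2) K n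
     = (\<gamma> - \<alpha>) * casorati (M+2) G n * casorati (M+2) L (n+1)"
proof -
  define s where "s = n + int M + 1"
  define D where "D = last_cols_det (M+2) (\<lambda>i j. G (n + 1 + int j) i)"
  have d: "2 \<le> M + 2" by simp
  have s_alt: "n + 1 + int M = s" by (simp add: s_def)
  have trivial: "G t i = G t i - 0 * G (t+1) i" for t i by simp
  have T1: "casorati (M+2) G n = (-1)^M * D (G n) (G s)"
    using casorati_as_last_cols_det_front[where f = G and g = G and \<beta> = 0, OF trivial] by (simp add: D_def s_def)
  have T2: "casorati (M+2) H n = (-1)^M * D (G n) (H s)"
    using casorati_as_last_cols_det_front[where f = H and g = G and \<beta> = \<alpha>, OF GH] by (simp add: D_def s_def)
  have T3: "casorati (M+2) K n = (-1)^M * D (G n) (K s)"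
    using casorati_as_last_cols_det_front[where f = K and g = G and \<beta> = \<gamma>, OF GK] by (simp add: D_def s_def)
  have T4: "\<alpha> * casorati (M+2) H (n+1) = D (G s) (H s)"
    using casorati_as_last_cols_det[where f = H and g = G and \<beta> = \<alpha>, OF GH, of M "n+1"]
      last_cols_det_diff_right[OF d GH[of s]] last_cols_det_self[OF d]
    by (simp add: D_def s_alt)
  have T5: "\<gamma> * casorati (M+2) K (n+1) = D (G s) (K s)"
    using casorati_as_last_cols_det[where f = K and g = G and \<beta> = \<gamma>, OF GK, of M "n+1"]
      last_cols_det_diff_right[OF d GK[of s]] last_cols_det_self[OF d]
    by (simp add: D_def s_alt)
  have "K s i = H s i - (\<alpha> - \<gamma>) * L (s+1) i" for i
    by (simp add: HL[of s] KL[of s] algebra_simps)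
  note L_step = last_cols_det_diff_right[OF d this]
  have "casorati (M+2) L (n+1) = D (H s) (L (s+1))"
    using casorati_as_last_cols_det[where f = L and g = H and \<beta> = \<gamma>, OF HL, of M "n+1"]
      last_cols_det_lower_middle_cols[where f = H and g = G and \<beta> = \<alpha>, OF GH, of M "n+1"]
    by (simp add: D_def s_alt)
  then have T6: "(\<alpha> - \<gamma>) * casorati (M+2) L (n+1) = - D (H s) (K s)"
    using L_step last_cols_det_self[OF d] by (simp add: D_def)
  have pluecker: "D (G n) (H s) * D (G s) (K s) - D (G n) (K s) * D (G s) (H s)
      = D (G n) (G s) * D (H s) (K s)"
    unfolding D_def by (rule last_cols_det_pluecker[OF d])
  have "\<gamma> * casorati (M+2) K (n+1) * casorati (M+2) H n - \<alpha> * casorati (M+2) H (n+1) * casorati (M+2) K n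
      = (-1)^M * (D (G n) (H s) * D (G s) (K s) - D (G n) (K s) * D (G s) (H s))"
    unfolding T2 T3 T4 T5 by (simp add: algebra_simps)
  also have "\<dots> = (-1)^M * D (G n) (G s) * D (H s) (K s)"
    unfolding pluecker by simp
  also have "\<dots> = - (casorati (M+2) G n * ((\<alpha> - \<gamma>) * casorati (M+2) L (n+1)))"
    unfolding T1 T6 by (simp add: algebra_simps)
  also have "\<dots> = (\<gamma> - \<alpha>) * casorati (M+2) G n * casorati (M+2) L (n+1)"
    by (simp add: algebra_simps)
  finally show ?thesis .
qed

lemma casorati_four_term_identity:
  assumes N: "1 \<le> N" and \<gamma>: "\<gamma> \<noteq> 0"
  shows "casorati N K (n+1) * casorati N H n - \<alpha> / \<gamma> * casorati N H (n+1) * casorati N K n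
     = (1 - \<alpha> / \<gamma>) * casorati N G n * casorati N L (n+1)"
proof (rule bilinear_identity_divide[OF \<gamma>])
  show "\<gamma> * casorati N K (n+1) * casorati N H n - \<alpha> * casorati N H (n+1) * casorati N K n
     = (\<gamma> - \<alpha>) * casorati N G n * casorati N L (n+1)"
  proof (cases "N = 1")
    case True
    have single: "casorati N f t = f t 0" for f t
      unfolding casorati_def True by (subst det_single) auto
    have k: "\<gamma> * K (n+1) 0 = K n 0 - G n 0" by (simp add: GK[of n 0])
    have h: "\<alpha> * H (n+1) 0 = H n 0 - G n 0" by (simp add: GH[of n 0])
    have l: "(\<gamma> - \<alpha>) * L (n+1) 0 = K n 0 - H n 0" by (simp add: HL[of n] KL[of n] algebra_simps)
    have "\<gamma> * K (n+1) 0 * H n 0 - \<alpha> * H (n+1) 0 * K n 0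
        = (K n 0 - G n 0) * H n 0 - (H n 0 - G n 0) * K n 0"
      unfolding k h ..
    also have "\<dots> = G n 0 * (K n 0 - H n 0)" by (simp add: algebra_simps)
    also have "\<dots> = (\<gamma> - \<alpha>) * G n 0 * L (n+1) 0" unfolding l[symmetric] by (simp add: algebra_simps)
    finally show ?thesis by (simp add: single)
  next
    case False
    then obtain M where "N = M + 2" using N by (metis add.commute le_Suc_ex le_antisym not_less_eq_eq one_add_one plus_1_eq_Suc)
    then show ?thesis by (simp only: casorati_four_term_identity_ge2)
  qed
qed

end

lemma casorati_lattice_identity:
  fixes F :: "int \<Rightarrow> int \<Rightarrow> int \<Rightarrow> nat \<Rightarrow> complex"
  assumes "1 \<le> N" "\<gamma> \<noteq> 0"
    and step_x: "\<And>x y t i. F x y t i = F (x+1) y t i - \<alpha> * F (x+1) y (t+1) i"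
    and step_y: "\<And>x y t i. F x y t i = F x (y-1) t i - \<gamma> * F x (y-1) (t+1) i"
  shows "casorati N (F x (y-1)) (n+1) * casorati N (F (x+1) y) n
           - \<alpha> / \<gamma> * casorati N (F (x+1) y) (n+1) * casorati N (F x (y-1)) n
       = (1 - \<alpha> / \<gamma>) * casorati N (F x y) n * casorati N (F (x+1) (y-1)) (n+1)"
  by (rule casorati_four_term_identity) (rule assms)+

section \<open>Bordered Gram determinants\<close>

definition extend2 :: "nat \<Rightarrow> (nat \<Rightarrow> complex) \<Rightarrow> complex \<Rightarrow> complex \<Rightarrow> nat \<Rightarrow> complex" where
  "extend2 N u s t = (\<lambda>i. if i < N then u i else if i = N then s else t)"

text \<open>Bordering: \<open>det (M + u\<^sub>1 z\<^sub>1\<^sup>T + u\<^sub>2 z\<^sub>2\<^sup>T) = det [[M, u\<^sub>1, u\<^sub>2], [-z\<^sub>1\<^sup>T, 1, 0], [-z\<^sub>2\<^sup>T, 0, 1]]\<close>.\<close>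
lemma det_rank_two_update_bordered:
  fixes M :: "nat \<Rightarrow> nat \<Rightarrow> complex" and u1 u2 z1 z2 :: "nat \<Rightarrow> complex"
  shows "last_cols_det (N+2) (\<lambda>i j. if i < N then M i j else if i = N then - z1 j else - z2 j)
           (extend2 N u1 1 0) (extend2 N u2 0 1)
         = det (mat N N (\<lambda>(i,j). M i j + u1 i * z1 j + u2 i * z2 j))"
proof -
  define A where "A = mat N N (\<lambda>(i,j). M i j)"
  define U where "U = mat N 2 (\<lambda>(i,j). if j = 0 then u1 i else u2 i)"
  define V where "V = mat 2 N (\<lambda>(i,j). if i = 0 then - z1 j else - z2 j)"
  define X where "X = mat N N (\<lambda>(i,j). M i j + u1 i * z1 j + u2 i * z2 j)"
  have A: "A \<in> carrier_mat N N" and U: "U \<in> carrier_mat N 2" and V: "V \<in> carrier_mat 2 N"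
    and X: "X \<in> carrier_mat N N" by (auto simp: A_def U_def V_def X_def)
  have "last_cols_mat (N+2) (\<lambda>i j. if i < N then M i j else if i = N then - z1 j else - z2 j)
      (extend2 N u1 1 0) (extend2 N u2 0 1) = four_block_mat A U V (1\<^sub>m 2)"
    by (rule eq_matI) (auto simp: last_cols_mat_def extend2_def A_def U_def V_def less_Suc_eq)
  also have "four_block_mat A U V (1\<^sub>m 2)
      = four_block_mat X U (0\<^sub>m 2 N) (1\<^sub>m 2) * four_block_mat (1\<^sub>m N) (0\<^sub>m N 2) V (1\<^sub>m 2)"
  proof -
    have "(U * V) $$ (i,j) = - u1 i * z1 j - u2 i * z2 j" if "i < N" "j < N" for i j
      using that U V by (simp add: scalar_prod_def U_def V_def numeral_2_eq_2 atLeast0_lessThan_Suc)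
    then have "X * 1\<^sub>m N + U * V = A"
      by (intro eq_matI) (use X U V in \<open>auto simp: A_def X_def\<close>)
    then show ?thesis
      by (subst mult_four_block_mat[OF X U zero_carrier_mat one_carrier_mat one_carrier_mat
            zero_carrier_mat V one_carrier_mat]) (use X U V in simp)
  qed
  finally have "last_cols_det (N+2) (\<lambda>i j. if i < N then M i j else if i = N then - z1 j else - z2 j)
      (extend2 N u1 1 0) (extend2 N u2 0 1)
      = det (four_block_mat X U (0\<^sub>m 2 N) (1\<^sub>m 2)) * det (four_block_mat (1\<^sub>m N) (0\<^sub>m N 2) V (1\<^sub>m 2))"
    unfolding last_cols_det_def
    by (simp add: det_mult[OF four_block_carrier_mat[OF X one_carrier_mat]
          four_block_carrier_mat[OF one_carrier_mat one_carrier_mat]])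
  also have "\<dots> = det X"
    by (simp add: det_four_block_mat_lower_left_zero[OF X U refl one_carrier_mat]
        det_four_block_mat_upper_right_zero[OF one_carrier_mat refl V one_carrier_mat])
  finally show ?thesis by (simp add: X_def)
qed

lemma rank_two_update_expansion:
  fixes N :: nat and M :: "nat \<Rightarrow> nat \<Rightarrow> complex" and A B z1 z2 :: "nat \<Rightarrow> complex"
  defines "D \<equiv> last_cols_det (N+2) (\<lambda>i j. if i < N then M i j else if i = N then - z1 j else - z2 j)"
    and "a \<equiv> extend2 N A 0 0" and "b \<equiv> extend2 N B 0 0"
    and "e1 \<equiv> extend2 N (\<lambda>_. 0) 1 0" and "e2 \<equiv> extend2 N (\<lambda>_. 0) 0 1"
  shows "det (mat N N (\<lambda>(i,j). M i j + (k1 * A i + k2 * B i) * z1 j + (l1 * A i + l2 * B i) * z2 j))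
     = (k1 * l2 - k2 * l1) * D a b - l1 * D a e1 + k1 * D a e2 - l2 * D b e1 + k2 * D b e2 + D e1 e2"
proof -
  have "extend2 N (\<lambda>i. k1 * A i + k2 * B i) 1 0 = (\<lambda>i. k1 * a i + k2 * b i + 1 * e1 i + 0 * e2 i)"
    and "extend2 N (\<lambda>i. l1 * A i + l2 * B i) 0 1 = (\<lambda>i. l1 * a i + l2 * b i + 0 * e1 i + 1 * e2 i)"
    by (auto simp: a_def b_def e1_def e2_def extend2_def)
  then have "det (mat N N (\<lambda>(i,j). M i j + (k1 * A i + k2 * B i) * z1 j + (l1 * A i + l2 * B i) * z2 j))
      = D (\<lambda>i. k1 * a i + k2 * b i + 1 * e1 i + 0 * e2 i) (\<lambda>i. l1 * a i + l2 * b i + 0 * e1 i + 1 * e2 i)"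
    unfolding D_def by (metis det_rank_two_update_bordered)
  also have "D (\<lambda>i. k1 * a i + k2 * b i + 1 * e1 i + 0 * e2 i) (\<lambda>i. l1 * a i + l2 * b i + 0 * e1 i + 1 * e2 i)
      = (k1 * l2 - k2 * l1) * D a b + (k1 * 0 - 1 * l1) * D a e1 + (k1 * 1 - 0 * l1) * D a e2
        + (k2 * 0 - 1 * l2) * D b e1 + (k2 * 1 - 0 * l2) * D b e2 + (1 * 1 - 0 * 0) * D e1 e2"
    unfolding D_def by (rule last_cols_det_combination) simp
  finally show ?thesis by simp
qed

lemma cauchy_entry_shift:
  fixes C W Z u v s \<alpha> :: complex
  assumes "u \<noteq> 0" "s \<noteq> 0" "v = u + \<alpha> * s"
  shows "C + W / u * (Z * v) / s = C + W * Z / s + \<alpha> * W / u * Z"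
  using assms by (simp add: field_simps)

lemma cauchy_entry_shift_n:
  fixes C W Z W' Z' u v s p q \<omega> :: complex
  assumes u: "u \<noteq> 0" and s: "s \<noteq> 0" and q: "q \<noteq> 0" and rel: "p * v = s - u * q + \<omega> * p * q * s"
    and W': "W' = W * (- p) / u" and Z': "Z' = Z * v / q"
  shows "C + W' * Z' / s = C + W * Z / s - \<omega> * p * W / u * Z - W / u * (Z / q)"
proof -
  have "W' * Z' / s = - (W * Z * ((p * v) / (u * q * s)))"
    unfolding W' Z' by (simp add: field_simps)
  also have "(p * v) / (u * q * s) = 1 / (u * q) - 1 / s + \<omega> * p / u"
    unfolding rel using u s q by (simp add: diff_divide_distrib add_divide_distrib)
  finally show ?thesis by (simp add: algebra_simps)
qed

lemma partial_fractions:
  fixes W p \<alpha> \<gamma> :: complex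
  assumes "1 - \<alpha> * p \<noteq> 0" "1 - \<gamma> * p \<noteq> 0" "\<alpha> \<noteq> \<gamma>"
  shows "- \<gamma> / (\<alpha> - \<gamma>) * (\<alpha> * W / (1 - \<alpha> * p)) + \<alpha> / (\<alpha> - \<gamma>) * (\<gamma> * W / (1 - \<gamma> * p))
           = - (\<alpha> * \<gamma> * p * W / ((1 - \<alpha> * p) * (1 - \<gamma> * p)))"
    and "- 1 / (\<alpha> - \<gamma>) * (\<alpha> * W / (1 - \<alpha> * p)) + 1 / (\<alpha> - \<gamma>) * (\<gamma> * W / (1 - \<gamma> * p))
           = - (W / ((1 - \<alpha> * p) * (1 - \<gamma> * p)))"
proof -
  define u1 u2 d where "u1 = 1 - \<alpha> * p" "u2 = 1 - \<gamma> * p" "d = \<alpha> - \<gamma>"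
  have nz: "u1 \<noteq> 0" "u2 \<noteq> 0" "d \<noteq> 0" using assms by (auto simp: u1_u2_d_def)
  have "- \<gamma> / d * (\<alpha> * W / u1) + \<alpha> / d * (\<gamma> * W / u2) = \<alpha> * \<gamma> * W / d * (1 / u2 - 1 / u1)"
    using nz by (simp add: field_simps)
  also have "1 / u2 - 1 / u1 = - d * p / (u1 * u2)"
    using nz by (simp add: diff_frac_eq u1_u2_d_def algebra_simps)
  finally have 1: "- \<gamma> / d * (\<alpha> * W / u1) + \<alpha> / d * (\<gamma> * W / u2) = - (\<alpha> * \<gamma> * p * W / (u1 * u2))"
    using nz by simp
  have "- 1 / d * (\<alpha> * W / u1) + 1 / d * (\<gamma> * W / u2) = W / d * (\<gamma> / u2 - \<alpha> / u1)"
    by (simp add: algebra_simps)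
  also have "\<gamma> / u2 - \<alpha> / u1 = - d / (u1 * u2)"
    using nz by (simp add: diff_frac_eq u1_u2_d_def algebra_simps)
  finally have 2: "- 1 / d * (\<alpha> * W / u1) + 1 / d * (\<gamma> * W / u2) = - (W / (u1 * u2))"
    using nz by simp
  from 1 2 show "- \<gamma> / (\<alpha> - \<gamma>) * (\<alpha> * W / (1 - \<alpha> * p)) + \<alpha> / (\<alpha> - \<gamma>) * (\<gamma> * W / (1 - \<gamma> * p))
           = - (\<alpha> * \<gamma> * p * W / ((1 - \<alpha> * p) * (1 - \<gamma> * p)))"
    and "- 1 / (\<alpha> - \<gamma>) * (\<alpha> * W / (1 - \<alpha> * p)) + 1 / (\<alpha> - \<gamma>) * (\<gamma> * W / (1 - \<gamma> * p))
           = - (W / ((1 - \<alpha> * p) * (1 - \<gamma> * p)))"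
    by (simp_all add: u1_u2_d_def)
qed

locale gram_lattice =
  fixes N :: nat and p q w z :: "nat \<Rightarrow> complex" and C :: "nat \<Rightarrow> nat \<Rightarrow> complex" and \<alpha> \<gamma> :: complex
  assumes \<alpha>: "\<alpha> \<noteq> 0" and \<gamma>: "\<gamma> \<noteq> 0"
    and pq: "\<And>i. i < N \<Longrightarrow> p i \<noteq> 0 \<and> q i \<noteq> 0"
    and ppq: "\<And>i j. i < N \<Longrightarrow> j < N \<Longrightarrow> p i + q j \<noteq> 0"
    and factors: "\<And>i. i < N \<Longrightarrow> 1 - \<alpha> * p i \<noteq> 0 \<and> 1 + \<alpha> * q i \<noteq> 0 \<and> 1 - \<gamma> * p i \<noteq> 0 \<and> 1 + \<gamma> * q i \<noteq> 0"
begin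

definition W :: "int \<Rightarrow> int \<Rightarrow> int \<Rightarrow> nat \<Rightarrow> complex" where
  "W s x y i = w i * (- p i) powi s * (1 - \<alpha> * p i) powi (-x) * (1 - \<gamma> * p i) powi y"

definition Z :: "int \<Rightarrow> int \<Rightarrow> int \<Rightarrow> nat \<Rightarrow> complex" where
  "Z s x y j = z j * q j powi (-s) * (1 + \<alpha> * q j) powi x * (1 + \<gamma> * q j) powi (-y)"

definition G :: "int \<Rightarrow> int \<Rightarrow> int \<Rightarrow> complex" where
  "G s x y = det (mat N N (\<lambda>(i,j). C i j + W s x y i * Z s x y j / (p i + q j)))"

lemma W_shift:
  assumes "i < N"
  shows "W (s+1) x y i = W s x y i * (- p i)"
    and "W s (x+1) y i = W s x y i / (1 - \<alpha> * p i)"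
    and "W s x (y-1) i = W s x y i / (1 - \<gamma> * p i)"
proof -
  have "- p i \<noteq> 0" "1 - \<alpha> * p i \<noteq> 0" "1 - \<gamma> * p i \<noteq> 0"
    using pq[OF assms] factors[OF assms] by auto
  then have "(- p i) powi (s+1) = (- p i) powi s * (- p i)"
    and "(1 - \<alpha> * p i) powi (-(x+1)) = (1 - \<alpha> * p i) powi (-x) / (1 - \<alpha> * p i)"
    and "(1 - \<gamma> * p i) powi (y-1) = (1 - \<gamma> * p i) powi y / (1 - \<gamma> * p i)"
    using power_int_diff[of "1 - \<alpha> * p i" "-x" 1] power_int_diff[of "1 - \<gamma> * p i" y 1]
    by (simp_all add: power_int_add_1)
  then show "W (s+1) x y i = W s x y i * (- p i)"
    and "W s (x+1) y i = W s x y i / (1 - \<alpha> * p i)"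
    and "W s x (y-1) i = W s x y i / (1 - \<gamma> * p i)"
    by (simp_all add: W_def)
qed

lemma Z_shift:
  assumes "j < N"
  shows "Z (s+1) x y j = Z s x y j / q j"
    and "Z s (x+1) y j = Z s x y j * (1 + \<alpha> * q j)"
    and "Z s x (y-1) j = Z s x y j * (1 + \<gamma> * q j)"
proof -
  have "q j \<noteq> 0" "1 + \<alpha> * q j \<noteq> 0" "1 + \<gamma> * q j \<noteq> 0"
    using pq[OF assms] factors[OF assms] by auto
  then have "q j powi (-(s+1)) = q j powi (-s) / q j"
    and "(1 + \<alpha> * q j) powi (x+1) = (1 + \<alpha> * q j) powi x * (1 + \<alpha> * q j)"
    and "(1 + \<gamma> * q j) powi (-(y-1)) = (1 + \<gamma> * q j) powi (-y) * (1 + \<gamma> * q j)"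
    using power_int_diff[of "q j" "-s" 1] power_int_add_1[of "1 + \<gamma> * q j" "-y"]
    by (simp_all add: power_int_add_1)
  then show "Z (s+1) x y j = Z s x y j / q j"
    and "Z s (x+1) y j = Z s x y j * (1 + \<alpha> * q j)"
    and "Z s x (y-1) j = Z s x y j * (1 + \<gamma> * q j)"
    by (simp_all add: Z_def)
qed

lemma gram_entry_shift:
  assumes i: "i < N" and j: "j < N"
  shows "C i j + W s (x+1) y i * Z s (x+1) y j / (p i + q j)
           = C i j + W s x y i * Z s x y j / (p i + q j) + \<alpha> * W s x y i / (1 - \<alpha> * p i) * Z s x y j"
    and "C i j + W s x (y-1) i * Z s x (y-1) j / (p i + q j)
           = C i j + W s x y i * Z s x y j / (p i + q j) + \<gamma> * W s x y i / (1 - \<gamma> * p i) * Z s x y j"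
    and "C i j + W (s+1) (x+1) y i * Z (s+1) (x+1) y j / (p i + q j)
           = C i j + W s x y i * Z s x y j / (p i + q j) - W s x y i / (1 - \<alpha> * p i) * (Z s x y j / q j)"
    and "C i j + W (s+1) x (y-1) i * Z (s+1) x (y-1) j / (p i + q j)
           = C i j + W s x y i * Z s x y j / (p i + q j) - W s x y i / (1 - \<gamma> * p i) * (Z s x y j / q j)"
    and "C i j + W (s+1) (x+1) (y-1) i * Z (s+1) (x+1) (y-1) j / (p i + q j)
           = C i j + W s x y i * Z s x y j / (p i + q j)
             - \<alpha> * \<gamma> * p i * W s x y i / ((1 - \<alpha> * p i) * (1 - \<gamma> * p i)) * Z s x y j
             - W s x y i / ((1 - \<alpha> * p i) * (1 - \<gamma> * p i)) * (Z s x y j / q j)"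
proof -
  have "(1 - \<alpha> * p i) * (1 - \<gamma> * p i) \<noteq> 0" using factors[OF i] by simp
  note nz = this pq[OF i] pq[OF j] factors[OF i] factors[OF j] ppq[OF i j]
  show "C i j + W s (x+1) y i * Z s (x+1) y j / (p i + q j)
      = C i j + W s x y i * Z s x y j / (p i + q j) + \<alpha> * W s x y i / (1 - \<alpha> * p i) * Z s x y j"
    unfolding W_shift[OF i] Z_shift[OF j] by (rule cauchy_entry_shift) (use nz in \<open>simp_all add: algebra_simps\<close>)
  show "C i j + W s x (y-1) i * Z s x (y-1) j / (p i + q j)
      = C i j + W s x y i * Z s x y j / (p i + q j) + \<gamma> * W s x y i / (1 - \<gamma> * p i) * Z s x y j"
    unfolding W_shift[OF i] Z_shift[OF j] by (rule cauchy_entry_shift) (use nz in \<open>simp_all add: algebra_simps\<close>)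
  have "C i j + W (s+1) (x+1) y i * Z (s+1) (x+1) y j / (p i + q j)
      = C i j + W s x y i * Z s x y j / (p i + q j) - 0 * p i * W s x y i / (1 - \<alpha> * p i) * Z s x y j
        - W s x y i / (1 - \<alpha> * p i) * (Z s x y j / q j)"
    by (rule cauchy_entry_shift_n[where v = "1 + \<alpha> * q j"];
        (simp only: W_shift[OF i] Z_shift[OF j])?; use nz in \<open>simp add: algebra_simps\<close>)
  then show "C i j + W (s+1) (x+1) y i * Z (s+1) (x+1) y j / (p i + q j)
      = C i j + W s x y i * Z s x y j / (p i + q j) - W s x y i / (1 - \<alpha> * p i) * (Z s x y j / q j)"
    by simp
  have "C i j + W (s+1) x (y-1) i * Z (s+1) x (y-1) j / (p i + q j)
      = C i j + W s x y i * Z s x y j / (p i + q j) - 0 * p i * W s x y i / (1 - \<gamma> * p i) * Z s x y j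
        - W s x y i / (1 - \<gamma> * p i) * (Z s x y j / q j)"
    by (rule cauchy_entry_shift_n[where v = "1 + \<gamma> * q j"];
        (simp only: W_shift[OF i] Z_shift[OF j])?; use nz in \<open>simp add: algebra_simps\<close>)
  then show "C i j + W (s+1) x (y-1) i * Z (s+1) x (y-1) j / (p i + q j)
      = C i j + W s x y i * Z s x y j / (p i + q j) - W s x y i / (1 - \<gamma> * p i) * (Z s x y j / q j)"
    by simp
  show "C i j + W (s+1) (x+1) (y-1) i * Z (s+1) (x+1) (y-1) j / (p i + q j)
      = C i j + W s x y i * Z s x y j / (p i + q j)
        - \<alpha> * \<gamma> * p i * W s x y i / ((1 - \<alpha> * p i) * (1 - \<gamma> * p i)) * Z s x y j
        - W s x y i / ((1 - \<alpha> * p i) * (1 - \<gamma> * p i)) * (Z s x y j / q j)"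
    by (rule cauchy_entry_shift_n[where v = "(1 + \<alpha> * q j) * (1 + \<gamma> * q j)"];
        (simp only: W_shift[OF i] Z_shift[OF j])?; use nz in \<open>simp add: algebra_simps\<close>)
qed

definition rank_two_update :: "int \<Rightarrow> int \<Rightarrow> int \<Rightarrow> complex \<Rightarrow> complex \<Rightarrow> complex \<Rightarrow> complex \<Rightarrow> complex" where
  "rank_two_update s x y k1 k2 l1 l2 = det (mat N N (\<lambda>(i,j).
      (C i j + W s x y i * Z s x y j / (p i + q j))
      + (k1 * (\<alpha> * W s x y i / (1 - \<alpha> * p i)) + k2 * (\<gamma> * W s x y i / (1 - \<gamma> * p i))) * Z s x y j
      + (l1 * (\<alpha> * W s x y i / (1 - \<alpha> * p i)) + l2 * (\<gamma> * W s x y i / (1 - \<gamma> * p i))) * (Z s x y j / q j)))"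

lemma G_eq_rank_two_update:
  shows "G s x y = rank_two_update s x y 0 0 0 0"
    and "G s (x+1) y = rank_two_update s x y 1 0 0 0"
    and "G s x (y-1) = rank_two_update s x y 0 1 0 0"
    and "G (s+1) (x+1) y = rank_two_update s x y 0 0 (-1/\<alpha>) 0"
    and "G (s+1) x (y-1) = rank_two_update s x y 0 0 0 (-1/\<gamma>)"
proof -
  have entrywise: "(\<And>i j. i < N \<Longrightarrow> j < N \<Longrightarrow> f i j = g i j)
      \<Longrightarrow> det (mat N N (\<lambda>(i,j). f i j)) = det (mat N N (\<lambda>(i,j). g i j))" for f g
    by (intro arg_cong[where f = det] cong_mat) auto
  show "G s x y = rank_two_update s x y 0 0 0 0"
    unfolding G_def rank_two_update_def by simp
  show "G s (x+1) y = rank_two_update s x y 1 0 0 0"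
    unfolding G_def rank_two_update_def by (rule entrywise) (simp add: gram_entry_shift(1))
  show "G s x (y-1) = rank_two_update s x y 0 1 0 0"
    unfolding G_def rank_two_update_def by (rule entrywise) (simp add: gram_entry_shift(2))
  show "G (s+1) (x+1) y = rank_two_update s x y 0 0 (-1/\<alpha>) 0"
    unfolding G_def rank_two_update_def by (rule entrywise) (simp add: gram_entry_shift(3) \<alpha>)
  show "G (s+1) x (y-1) = rank_two_update s x y 0 0 0 (-1/\<gamma>)"
    unfolding G_def rank_two_update_def by (rule entrywise) (simp add: gram_entry_shift(4) \<gamma>)
qed

lemma G_eq_rank_two_update_diagonal:
  assumes "\<alpha> \<noteq> \<gamma>"
  shows "G (s+1) (x+1) (y-1)
    = rank_two_update s x y (- \<gamma> / (\<alpha> - \<gamma>)) (\<alpha> / (\<alpha> - \<gamma>)) (- 1 / (\<alpha> - \<gamma>)) (1 / (\<alpha> - \<gamma>))"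
  unfolding G_def rank_two_update_def
proof (intro arg_cong[where f = det] cong_mat refl)
  fix i j assume i: "i < N" and j: "j < N"
  have "1 - \<alpha> * p i \<noteq> 0" "1 - \<gamma> * p i \<noteq> 0" using factors[OF i] by auto
  note fractions = partial_fractions[OF this assms, of "W s x y i"]
  show "(\<lambda>(i,j). C i j + W (s+1) (x+1) (y-1) i * Z (s+1) (x+1) (y-1) j / (p i + q j)) (i,j)
    = (\<lambda>(i,j). (C i j + W s x y i * Z s x y j / (p i + q j))
      + (- \<gamma> / (\<alpha> - \<gamma>) * (\<alpha> * W s x y i / (1 - \<alpha> * p i)) + \<alpha> / (\<alpha> - \<gamma>) * (\<gamma> * W s x y i / (1 - \<gamma> * p i))) * Z s x y j
      + (- 1 / (\<alpha> - \<gamma>) * (\<alpha> * W s x y i / (1 - \<alpha> * p i)) + 1 / (\<alpha> - \<gamma>) * (\<gamma> * W s x y i / (1 - \<gamma> * p i))) * (Z s x y j / q j)) (i,j)"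
    unfolding case_prod_conv gram_entry_shift(5)[OF i j] fractions by (simp add: algebra_simps)
qed

lemma gram_det_bilinear_scaled:
  assumes "\<alpha> \<noteq> \<gamma>"
  shows "\<gamma> * G (n+1) x (y-1) * G n (x+1) y - \<alpha> * G (n+1) (x+1) y * G n x (y-1)
     = (\<gamma> - \<alpha>) * G n x y * G (n+1) (x+1) (y-1)"
proof -
  define D where "D = last_cols_det (N+2) (\<lambda>i j. if i < N then C i j + W n x y i * Z n x y j / (p i + q j)
    else if i = N then - Z n x y j else - (Z n x y j / q j))"
  define a where "a = extend2 N (\<lambda>i. \<alpha> * W n x y i / (1 - \<alpha> * p i)) 0 0"
  define b where "b = extend2 N (\<lambda>i. \<gamma> * W n x y i / (1 - \<gamma> * p i)) 0 0"
  define e1 where "e1 = extend2 N (\<lambda>_. 0) 1 0"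
  define e2 where "e2 = extend2 N (\<lambda>_. 0) 0 1"
  have expand: "rank_two_update n x y k1 k2 l1 l2
      = (k1 * l2 - k2 * l1) * D a b - l1 * D a e1 + k1 * D a e2 - l2 * D b e1 + k2 * D b e2 + D e1 e2"
    for k1 k2 l1 l2
    unfolding rank_two_update_def D_def a_def b_def e1_def e2_def by (rule rank_two_update_expansion)
  have t1: "G n x y = D e1 e2"
    and t2: "G n (x+1) y = D a e2 + D e1 e2"
    and t3: "G n x (y-1) = D b e2 + D e1 e2"
    and t4: "\<alpha> * G (n+1) (x+1) y = D a e1 + \<alpha> * D e1 e2"
    and t5: "\<gamma> * G (n+1) x (y-1) = D b e1 + \<gamma> * D e1 e2"
    unfolding G_eq_rank_two_update(1-5)[of n x y] expand using \<alpha> \<gamma> by (simp_all add: algebra_simps)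
  have t6: "(\<alpha> - \<gamma>) * G (n+1) (x+1) (y-1)
      = D a b + D a e1 - \<gamma> * D a e2 - D b e1 + \<alpha> * D b e2 + (\<alpha> - \<gamma>) * D e1 e2"
  proof -
    define d where "d = \<alpha> - \<gamma>"
    have d: "d \<noteq> 0" "\<alpha> = d + \<gamma>" using assms by (simp_all add: d_def)
    show ?thesis
      unfolding G_eq_rank_two_update_diagonal[OF assms, of n x y] expand d_def[symmetric]
      unfolding d(2) using d(1) by (simp add: field_simps)
  qed
  have pluecker: "D a e1 * D b e2 - D a e2 * D b e1 = D a b * D e1 e2"
    unfolding D_def by (rule last_cols_det_pluecker) simp
  have "\<gamma> * G (n+1) x (y-1) * G n (x+1) y - \<alpha> * G (n+1) (x+1) y * G n x (y-1)
      = (D b e1 + \<gamma> * D e1 e2) * (D a e2 + D e1 e2) - (D a e1 + \<alpha> * D e1 e2) * (D b e2 + D e1 e2)"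
    unfolding t2 t3 t4 t5 ..
  also have "\<dots> = D e1 e2 * (D b e1 + \<gamma> * D a e2 - D a e1 - \<alpha> * D b e2 + (\<gamma> - \<alpha>) * D e1 e2)
      - (D a e1 * D b e2 - D a e2 * D b e1)"
    by (simp add: algebra_simps)
  also have "\<dots> = - (G n x y * ((\<alpha> - \<gamma>) * G (n+1) (x+1) (y-1)))"
    unfolding pluecker t1 t6 by (simp add: algebra_simps)
  finally show ?thesis by (simp add: algebra_simps)
qed

lemma gram_det_bilinear:
  "G (n+1) x (y-1) * G n (x+1) y - \<alpha> / \<gamma> * G (n+1) (x+1) y * G n x (y-1)
     = (1 - \<alpha> / \<gamma>) * G n x y * G (n+1) (x+1) (y-1)"
proof (rule bilinear_identity_divide[OF \<gamma>], cases "\<alpha> = \<gamma>")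
  case True
  have "G n (x+1) y = G n x (y-1)" "G (n+1) (x+1) y = G (n+1) x (y-1)"
    unfolding G_eq_rank_two_update(2-5)[of n x y] rank_two_update_def by (simp_all add: True)
  then show "\<gamma> * G (n+1) x (y-1) * G n (x+1) y - \<alpha> * G (n+1) (x+1) y * G n x (y-1)
     = (\<gamma> - \<alpha>) * G n x y * G (n+1) (x+1) (y-1)"
    using True by simp
qed (rule gram_det_bilinear_scaled)

end

section \<open>The two tau functions\<close>

lemma bilinear_identity_rescale:
  fixes A B C D E F K1 K2 b c :: complex
  assumes "K1 \<noteq> 0" "K2 \<noteq> 0" "b \<noteq> 0" "c \<noteq> 0"
    and "K1 * A * (K2 * B) - 1 / b / c * (K2 * C) * (K1 * D) = (1 - 1 / b / c) * (K1 * E) * (K2 * F)"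
  shows "C * D - b * c * A * B = (1 - b * c) * E * F"
proof -
  have "(K1 * K2) * (A * B - 1 / b / c * C * D) = (K1 * K2) * ((1 - 1 / b / c) * E * F)"
    using assms(5) by (simp add: algebra_simps)
  then have "A * B - 1 / b / c * C * D = (1 - 1 / b / c) * E * F"
    using assms(1,2) by simp
  then have "- (b * c) * (A * B - 1 / b / c * C * D) = - (b * c) * ((1 - 1 / b / c) * E * F)"
    by simp
  then show ?thesis using assms(3,4) by (simp add: algebra_simps)
qed

definition plane_wave :: "complex \<Rightarrow> complex \<Rightarrow> complex \<Rightarrow> complex \<Rightarrow> int \<Rightarrow> int \<Rightarrow> int \<Rightarrow> int \<Rightarrow> complex" where
  "plane_wave a b c p n k l m = p powi n * (1 - a*p) powi (-k) * (1 - b/p) powi (-l) * (1 - c*p) powi m"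

lemma phi_eq_plane_waves:
  "phi a b c p q cc d i n k l m = cc i * plane_wave a b c (p i) n k l m + d i * plane_wave a b c (q i) n k l m"
  by (simp add: phi_def plane_wave_def mult.assoc)

context
  fixes a b c p :: complex
  assumes p: "p \<noteq> 0"
begin

lemma plane_wave_step_k:
  assumes "1 - a*p \<noteq> 0"
  shows "plane_wave a b c p n k l m = plane_wave a b c p n (k+1) l m - a * plane_wave a b c p (n+1) (k+1) l m"
proof -
  have 1: "(1 - a*p) powi (-k) = (1 - a*p) powi (-(k+1)) * (1 - a*p)"
    using power_int_add_1[OF disjI1[OF assms], of "-(k+1)"] by simp
  have 2: "p powi (n+1) = p powi n * p" using p by (simp add: power_int_add_1)
  show ?thesis unfolding plane_wave_def 1 2 by (simp add: algebra_simps)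
qed

lemma plane_wave_step_m:
  assumes "1 - c*p \<noteq> 0"
  shows "plane_wave a b c p n k l m = plane_wave a b c p n k l (m-1) - c * plane_wave a b c p (n+1) k l (m-1)"
proof -
  have 1: "(1 - c*p) powi m = (1 - c*p) powi (m-1) * (1 - c*p)"
    using power_int_add_1[OF disjI1[OF assms], of "m-1"] by simp
  have 2: "p powi (n+1) = p powi n * p" using p by (simp add: power_int_add_1)
  show ?thesis unfolding plane_wave_def 1 2 by (simp add: algebra_simps)
qed

lemma plane_wave_step_l:
  assumes "1 - b/p \<noteq> 0"
  shows "plane_wave a b c p n k l m = plane_wave a b c p n k (l+1) m - b * plane_wave a b c p (n-1) k (l+1) m"
proof -
  have 1: "(1 - b/p) powi (-l) = (1 - b/p) powi (-(l+1)) * (1 - b/p)"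
    using power_int_add_1[OF disjI1[OF assms], of "-(l+1)"] by simp
  have 2: "p powi n = p powi (n-1) * p" using power_int_add_1[of p "n-1"] p by simp
  have 3: "p powi (n-1) * p * (1 - b/p) = p powi n - b * p powi (n-1)"
    unfolding 2 using p by (simp add: algebra_simps)
  have "plane_wave a b c p n k l m
      = (p powi (n-1) * p * (1 - b/p)) * (1 - a*p) powi (-k) * (1 - b/p) powi (-(l+1)) * (1 - c*p) powi m"
    unfolding plane_wave_def 1 2 by (simp add: algebra_simps)
  also have "\<dots> = plane_wave a b c p n k (l+1) m - b * plane_wave a b c p (n-1) k (l+1) m"
    unfolding 3 plane_wave_def by (simp add: algebra_simps)
  finally show ?thesis .
qed

end

context
  fixes a b c :: complex and N :: nat and p q cc d :: "nat \<Rightarrow> complex"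
  assumes pq: "\<And>i. i < N \<Longrightarrow> p i \<noteq> 0 \<and> q i \<noteq> 0"
    and factors: "\<And>i. i < N \<Longrightarrow> 1 - a * p i \<noteq> 0 \<and> 1 - b / p i \<noteq> 0 \<and> 1 - c * p i \<noteq> 0
                          \<and> 1 - a * q i \<noteq> 0 \<and> 1 - b / q i \<noteq> 0 \<and> 1 - c * q i \<noteq> 0"
begin

lemma phi_step_k:
  assumes "i < N"
  shows "phi a b c p q cc d i n k l m = phi a b c p q cc d i n (k+1) l m - a * phi a b c p q cc d i (n+1) (k+1) l m"
proof -
  have "p i \<noteq> 0" "q i \<noteq> 0" "1 - a * p i \<noteq> 0" "1 - a * q i \<noteq> 0"
    using pq[OF assms] factors[OF assms] by auto
  then show ?thesis
    unfolding phi_eq_plane_waves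
    by (simp add: plane_wave_step_k[where a = a and b = b and c = c and n = n and k = k and l = l and m = m]
        algebra_simps)
qed

lemma phi_step_m:
  assumes "i < N"
  shows "phi a b c p q cc d i n k l m = phi a b c p q cc d i n k l (m-1) - c * phi a b c p q cc d i (n+1) k l (m-1)"
proof -
  have "p i \<noteq> 0" "q i \<noteq> 0" "1 - c * p i \<noteq> 0" "1 - c * q i \<noteq> 0"
    using pq[OF assms] factors[OF assms] by auto
  then show ?thesis
    unfolding phi_eq_plane_waves
    by (simp add: plane_wave_step_m[where a = a and b = b and c = c and n = n and k = k and l = l and m = m]
        algebra_simps)
qed

lemma phi_step_l:
  assumes "i < N"
  shows "phi a b c p q cc d i n k l m = phi a b c p q cc d i n k (l+1) m - b * phi a b c p q cc d i (n-1) k (l+1) m"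
proof -
  have "p i \<noteq> 0" "q i \<noteq> 0" "1 - b / p i \<noteq> 0" "1 - b / q i \<noteq> 0"
    using pq[OF assms] factors[OF assms] by auto
  then show ?thesis
    unfolding phi_eq_plane_waves
    by (simp add: plane_wave_step_l[where a = a and b = b and c = c and n = n and k = k and l = l and m = m]
        algebra_simps)
qed

lemma tau_cas_km_equation:
  assumes "1 \<le> N" "c \<noteq> 0"
  shows "tau_cas a b c N p q cc d (n+1) k l (m-1) * tau_cas a b c N p q cc d n (k+1) l m
           - a / c * tau_cas a b c N p q cc d (n+1) (k+1) l m * tau_cas a b c N p q cc d n k l (m-1)
       = (1 - a / c) * tau_cas a b c N p q cc d n k l m * tau_cas a b c N p q cc d (n+1) (k+1) l (m-1)"
proof -
  define F where "F x y t i = (if i < N then phi a b c p q cc d i t x l y else 0)" for x y t i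
  have step_x: "F x y t i = F (x+1) y t i - a * F (x+1) y (t+1) i" for x y t i
    using phi_step_k[of i t x l y] by (simp add: F_def)
  have step_y: "F x y t i = F x (y-1) t i - c * F x (y-1) (t+1) i" for x y t i
    using phi_step_m[of i t x l y] by (simp add: F_def)
  have tau: "tau_cas a b c N p q cc d t x l y = casorati N (F x y) t" for t x y
    unfolding tau_cas_def casorati_def F_def by (intro arg_cong[where f = det] cong_mat) auto
  show ?thesis
    unfolding tau by (rule casorati_lattice_identity[where F = F, OF assms step_x step_y])
qed

lemma tau_cas_lm_equation:
  assumes N: "1 \<le> N" and b: "b \<noteq> 0" and c: "c \<noteq> 0"
  shows "tau_cas a b c N p q cc d n k (l+1) m * tau_cas a b c N p q cc d n k l (m-1)
           - b * c * tau_cas a b c N p q cc d (n+1) k l (m-1) * tau_cas a b c N p q cc d (n-1) k (l+1) m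
       = (1 - b * c) * tau_cas a b c N p q cc d n k l m * tau_cas a b c N p q cc d n k (l+1) (m-1)"
proof -
  define F where "F x y t i = (if i < N then (-b) powi x * phi a b c p q cc d i (t - x) k x y else 0)"
    for x y t i
  have step_x: "F x y t i = F (x+1) y t i - 1/b * F (x+1) y (t+1) i" for x y t i
  proof (cases "i < N")
    case True
    have "(-b) powi (x+1) = (-b) powi x * (-b)" using b by (simp add: power_int_add_1)
    then show ?thesis
      unfolding F_def phi_step_l[OF True, of "t - x" k x y] using b by (simp add: algebra_simps)
  qed (simp add: F_def)
  have step_y: "F x y t i = F x (y-1) t i - c * F x (y-1) (t+1) i" for x y t i
    by (cases "i < N") (simp_all add: F_def phi_step_m[of i "t - x" k x y] algebra_simps)
  have tau: "casorati N (F x y) t = ((-b) powi x)^N * tau_cas a b c N p q cc d (t - x) k x y" for t x y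
  proof -
    have "mat N N (\<lambda>(i,j). F x y (t + int j) i)
        = (-b) powi x \<cdot>\<^sub>m mat N N (\<lambda>(i,j). phi a b c p q cc d i (t - x + int j) k x y)"
      by (rule eq_matI) (auto simp: F_def algebra_simps)
    then show ?thesis unfolding casorati_def tau_cas_def by simp
  qed
  have "((-b) powi l)^N \<noteq> 0" "((-b) powi (l+1))^N \<noteq> 0" using b by auto
  moreover note casorati_lattice_identity[where F = F, OF N c step_x step_y, of l m "n + l"]
  ultimately show ?thesis
    unfolding tau by (intro bilinear_identity_rescale[OF _ _ b c]) (simp_all add: algebra_simps)
qed

lemma tau_cas_bilinear_eqs:
  assumes "b \<noteq> 0" "c \<noteq> 0" "1 \<le> N"
  shows "bilinear_eqs a b c (tau_cas a b c N p q cc d)"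
  unfolding bilinear_eqs_def using tau_cas_lm_equation tau_cas_km_equation assms by blast

end

lemma power_int_divide_eq_mult_minus:
  fixes u v :: complex
  shows "(u / v) powi e = u powi e * v powi (-e)"
  unfolding power_int_divide_distrib power_int_minus by (simp add: divide_inverse)

lemma gauge_factor:
  fixes b p q :: complex
  assumes p: "p \<noteq> 0" and q: "q \<noteq> 0" and b: "b \<noteq> 0" and bq: "1 + b / q \<noteq> 0"
  shows "((1 - b / p) / (1 + b / q)) powi (-x) = (- p / q) powi x * ((1 - 1 / b * p) / (1 + 1 / b * q)) powi (-x)"
proof -
  define r where "r = b + q"
  have r: "r \<noteq> 0" using bq q by (simp add: r_def field_simps)
  have fractions: "1 + b / q = r / q" "1 + 1 / b * q = r / b" "1 - b / p = (p - b) / p"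
    "1 - 1 / b * p = (b - p) / b"
    using p q b by (simp_all add: r_def field_simps)
  have gauge: "(1 - b / p) / (1 + b / q) = inverse (- p / q) * ((1 - 1 / b * p) / (1 + 1 / b * q))"
    unfolding fractions using p q b r by (simp add: field_simps)
  show ?thesis
    unfolding gauge power_int_mult_distrib power_int_inverse power_int_minus by simp
qed

context
  fixes a b c :: complex and N :: nat and p q :: "nat \<Rightarrow> complex" and C :: "nat \<Rightarrow> nat \<Rightarrow> complex"
  assumes pq: "\<And>i. i < N \<Longrightarrow> p i \<noteq> 0 \<and> q i \<noteq> 0"
    and ppq: "\<And>i j. i < N \<Longrightarrow> j < N \<Longrightarrow> p i + q j \<noteq> 0"
    and factors: "\<And>i. i < N \<Longrightarrow> 1 - a * p i \<noteq> 0 \<and> 1 - b / p i \<noteq> 0 \<and> 1 - c * p i \<noteq> 0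
                          \<and> 1 + a * q i \<noteq> 0 \<and> 1 + b / q i \<noteq> 0 \<and> 1 + c * q i \<noteq> 0"
begin

lemma tau_gram_km_equation:
  assumes "a \<noteq> 0" "c \<noteq> 0"
  shows "tau_gram a b c N p q C (n+1) k l (m-1) * tau_gram a b c N p q C n (k+1) l m
           - a / c * tau_gram a b c N p q C (n+1) (k+1) l m * tau_gram a b c N p q C n k l (m-1)
       = (1 - a / c) * tau_gram a b c N p q C n k l m * tau_gram a b c N p q C (n+1) (k+1) l (m-1)"
proof -
  interpret gram_lattice N p q "\<lambda>i. (1 - b / p i) powi (-l)" "\<lambda>j. (1 + b / q j) powi l" C a c
    by unfold_locales (use assms pq ppq factors in auto)
  have "tau_gram a b c N p q C s x l y = G s x y" for s x y
    unfolding tau_gram_def G_def W_def Z_def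
    by (intro arg_cong[where f = det] cong_mat refl)
      (unfold power_int_divide_eq_mult_minus, simp add: ac_simps)
  then show ?thesis by (simp only: gram_det_bilinear)
qed

lemma tau_gram_lm_equation:
  assumes b: "b \<noteq> 0" and c: "c \<noteq> 0"
  shows "tau_gram a b c N p q C n k (l+1) m * tau_gram a b c N p q C n k l (m-1)
           - b * c * tau_gram a b c N p q C (n+1) k l (m-1) * tau_gram a b c N p q C (n-1) k (l+1) m
       = (1 - b * c) * tau_gram a b c N p q C n k l m * tau_gram a b c N p q C n k (l+1) (m-1)"
proof -
  have "1 - 1 / b * p i \<noteq> 0 \<and> 1 + 1 / b * q i \<noteq> 0" if "i < N" for i
    using factors[OF that] pq[OF that] b by (auto simp: field_simps)
  then interpret gl: gram_lattice N p q "\<lambda>i. (1 - a * p i) powi (-k)" "\<lambda>j. (1 + a * q j) powi k" C "1/b" c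
    by unfold_locales (use b c pq ppq factors in auto)
  have entry: "C i j + 1 / (p i + q j) * (- p i / q j) powi s * ((1 - a * p i) / (1 + a * q j)) powi (- k)
        * ((1 - b / p i) / (1 + b / q j)) powi (- x) * ((1 - c * p i) / (1 + c * q j)) powi y
      = C i j + gl.W (s + x) x y i * gl.Z (s + x) x y j / (p i + q j)"
    if "i < N" "j < N" for i j s x y
  proof -
    have gauge: "((1 - b / p i) / (1 + b / q j)) powi (- x)
        = (- p i / q j) powi x * ((1 - 1 / b * p i) / (1 + 1 / b * q j)) powi (- x)"
      by (rule gauge_factor) (use pq factors that b in auto)
    have add: "(- p i / q j) powi s * (- p i / q j) powi x = (- p i / q j) powi (s + x)"
      using pq that by (simp add: power_int_add)
    have "1 / (p i + q j) * (- p i / q j) powi s * ((1 - a * p i) / (1 + a * q j)) powi (- k)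
        * ((1 - b / p i) / (1 + b / q j)) powi (- x) * ((1 - c * p i) / (1 + c * q j)) powi y
      = 1 / (p i + q j) * ((- p i / q j) powi s * (- p i / q j) powi x) * ((1 - a * p i) / (1 + a * q j)) powi (- k)
        * ((1 - 1 / b * p i) / (1 + 1 / b * q j)) powi (- x) * ((1 - c * p i) / (1 + c * q j)) powi y"
      unfolding gauge by (simp add: ac_simps)
    also have "\<dots> = gl.W (s + x) x y i * gl.Z (s + x) x y j / (p i + q j)"
      unfolding add unfolding gl.W_def gl.Z_def power_int_divide_eq_mult_minus by (simp add: ac_simps)
    finally show ?thesis by simp
  qed
  have "tau_gram a b c N p q C s k x y = gl.G (s + x) x y" for s x y
    unfolding tau_gram_def gl.G_def
    by (intro arg_cong[where f = det] cong_mat refl) (simp only: case_prod_conv entry)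
  then have "tau_gram a b c N p q C (n+1) k l (m-1) * tau_gram a b c N p q C (n-1) k (l+1) m
           - 1 / b / c * tau_gram a b c N p q C n k (l+1) m * tau_gram a b c N p q C n k l (m-1)
       = (1 - 1 / b / c) * tau_gram a b c N p q C n k l m * tau_gram a b c N p q C n k (l+1) (m-1)"
    using gl.gram_det_bilinear[of "n + l" l m] by (simp add: ac_simps)
  then show ?thesis
    by (intro bilinear_identity_rescale[of 1 1 b c]) (simp_all add: b c)
qed

lemma tau_gram_bilinear_eqs:
  assumes "a \<noteq> 0" "b \<noteq> 0" "c \<noteq> 0"
  shows "bilinear_eqs a b c (tau_gram a b c N p q C)"
  unfolding bilinear_eqs_def using tau_gram_lm_equation tau_gram_km_equation assms by blast

end

theorem proposition1:
  fixes a b c :: complex and N :: nat and p q :: "nat \<Rightarrow> complex"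
    and C :: "nat \<Rightarrow> nat \<Rightarrow> complex" and cc d :: "nat \<Rightarrow> complex"
  assumes "a \<noteq> 0" "b \<noteq> 0" "c \<noteq> 0" "N \<ge> 1"
    and "\<And>i. i < N \<Longrightarrow> p i \<noteq> 0" "\<And>j. j < N \<Longrightarrow> q j \<noteq> 0"
    and "\<And>i j. i < N \<Longrightarrow> j < N \<Longrightarrow> p i + q j \<noteq> 0"
  shows "((\<forall>i<N. 1 - a * p i \<noteq> 0 \<and> 1 - b / p i \<noteq> 0 \<and> 1 - c * p i \<noteq> 0
             \<and> 1 + a * q i \<noteq> 0 \<and> 1 + b / q i \<noteq> 0 \<and> 1 + c * q i \<noteq> 0)
          \<longrightarrow> bilinear_eqs a b c (tau_gram a b c N p q C))
       \<and> ((\<forall>i<N. 1 - a * p i \<noteq> 0 \<and> 1 - b / p i \<noteq> 0 \<and> 1 - c * p i \<noteq> 0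
             \<and> 1 - a * q i \<noteq> 0 \<and> 1 - b / q i \<noteq> 0 \<and> 1 - c * q i \<noteq> 0)
          \<longrightarrow> bilinear_eqs a b c (tau_cas a b c N p q cc d))"
proof (intro conjI impI)
  assume "\<forall>i<N. 1 - a * p i \<noteq> 0 \<and> 1 - b / p i \<noteq> 0 \<and> 1 - c * p i \<noteq> 0
             \<and> 1 + a * q i \<noteq> 0 \<and> 1 + b / q i \<noteq> 0 \<and> 1 + c * q i \<noteq> 0"
  then show "bilinear_eqs a b c (tau_gram a b c N p q C)"
    using assms by (intro tau_gram_bilinear_eqs) auto
next
  assume "\<forall>i<N. 1 - a * p i \<noteq> 0 \<and> 1 - b / p i \<noteq> 0 \<and> 1 - c * p i \<noteq> 0
             \<and> 1 - a * q i \<noteq> 0 \<and> 1 - b / q i \<noteq> 0 \<and> 1 - c * q i \<noteq> 0"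
  then show "bilinear_eqs a b c (tau_cas a b c N p q cc d)"
    using assms by (intro tau_cas_bilinear_eqs) auto
qed

end
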